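(* Let $n\ge 3$, $u>0$, and let $S=[A_0,\dots,A_n]$ be an $n$-simplex with $\|A_i-A_0\|^2=v_i$ for $1\le i\le n$ and $\|A_i-A_j\|^2=u$ for $1\le i<j\le n$. For $0\le j\le n$ let $S_j$ be the facet of $S$ obtained by removing the vertex $A_j$, and let $\mathcal{C}_j,\mathcal{D}_j$ be the Cayley–Menger and inner Cayley–Menger determinants of $S_j$. Put $\alpha=u+v_1+\cdots+v_n$ and $\beta=u^2+v_1^2+\cdots+v_n^2$. Then for $1\le j\le n$: $$\mathcal{C}_0=(-1)^n n u^{n-1},\qquad \mathcal{C}_j=(-u)^{n-3}\big[-\alpha^2+(n-1)\beta-nv_j^2+2\alpha v_j\big],$$ $$\mathcal{D}_0=(-1)^{n+1}u^n(n-1),$$ $$\mathcal{D}_j=(-u)^{n-2}\big[(n-2)\beta-\alpha^2+2\alpha u-(n-1)u^2-(n-1)v_j^2+2\alpha v_j-2uv_j\big].$$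
   Context: For an $m$-simplex $T=[B_0,\dots,B_m]$ with $b_{i,j}=\|B_i-B_j\|^2$, the Cayley–Menger determinant is the $(m+2)\times(m+2)$ determinant with rows/columns indexed by $-1,0,\dots,m$, entries $0$ on the diagonal, $1$ in the rest of row $-1$ and column $-1$, and $b_{i,j}$ otherwise; the inner Cayley–Menger determinant is $\det(b_{i,j})_{0\le i,j\le m}$. *)

theory Defs
  imports "HOL-Analysis.Affine" "Jordan_Normal_Form.Determinant"
begin

text \<open>Cayley-Menger determinant of an m-simplex with vertices B 0, ..., B m.
  Row/column index 0 of the matrix corresponds to the index -1 of the paper,
  index k+1 corresponds to vertex B k.\<close>
definition cayley_menger :: "nat \<Rightarrow> (nat \<Rightarrow> 'a::real_normed_vector) \<Rightarrow> real" where
  "cayley_menger m B = det (mat (m+2) (m+2)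
     (\<lambda>(i,j). if i = j then 0
              else if i = 0 \<or> j = 0 then 1
              else (norm (B (i-1) - B (j-1)))\<^sup>2))"

definition inner_cayley_menger :: "nat \<Rightarrow> (nat \<Rightarrow> 'a::real_normed_vector) \<Rightarrow> real" where
  "inner_cayley_menger m B = det (mat (m+1) (m+1) (\<lambda>(i,j). (norm (B i - B j))\<^sup>2))"

definition facet :: "nat \<Rightarrow> (nat \<Rightarrow> 'a) \<Rightarrow> (nat \<Rightarrow> 'a)" where
  "facet j A = (\<lambda>k. if k < j then A k else A (Suc k))"

end

theory Submission
  imports Defs
begin

text \<open>All edges between \<open>A\<^sub>1, \<dots>, A\<^sub>n\<close> have squared length \<open>u\<close>, so every (inner)
  Cayley--Menger matrix of a facet is \<open>-u\<close> times the identity plus a matrix of rank at most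
  four. Sylvester's identity \<open>c\<^sup>k det (c I\<^sub>N + U W) = c\<^sup>N det (c I\<^sub>k + W U)\<close> turns it into a
  determinant of size at most four, which is expanded by hand. The facet \<open>S\<^sub>0\<close> is regular,
  and it is the special case of the same computation in which all distances from the first
  vertex are also \<open>u\<close>.\<close>

lemma det_sylvester:
  fixes U W :: "'a::field mat"
  assumes U: "U \<in> carrier_mat N k" and W: "W \<in> carrier_mat k N" and c: "c \<noteq> 0"
  shows "c^k * det (c \<cdot>\<^sub>m 1\<^sub>m N + U * W) = c^N * det (c \<cdot>\<^sub>m 1\<^sub>m k + W * U)"
proof -
  define M where "M = four_block_mat (c \<cdot>\<^sub>m 1\<^sub>m N) U (- W) (1\<^sub>m k)"
  define R where "R = four_block_mat (1\<^sub>m N) (0\<^sub>m N k) W (1\<^sub>m k)"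
  define L where "L = four_block_mat (1\<^sub>m N) (0\<^sub>m N k) ((1/c) \<cdot>\<^sub>m W) (1\<^sub>m k)"
  have carrier: "M \<in> carrier_mat (N+k) (N+k)" "R \<in> carrier_mat (N+k) (N+k)"
    "L \<in> carrier_mat (N+k) (N+k)"
    unfolding M_def R_def L_def using U W by auto
  have MR: "M * R = four_block_mat (c \<cdot>\<^sub>m 1\<^sub>m N + U * W) U (0\<^sub>m k N) (1\<^sub>m k)"
    unfolding M_def R_def using U W by (subst mult_four_block_mat) auto
  have LM: "L * M = four_block_mat (c \<cdot>\<^sub>m 1\<^sub>m N) U (0\<^sub>m k N) (1\<^sub>m k + (1/c) \<cdot>\<^sub>m (W * U))"
    unfolding M_def L_def using U W c
    by (subst mult_four_block_mat) auto
  have "det (c \<cdot>\<^sub>m 1\<^sub>m N + U * W) = det M"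
    using det_mult[OF carrier(1,2)] MR U W
    by (simp add: R_def det_four_block_mat_lower_left_zero[of _ N _ k]
                  det_four_block_mat_upper_right_zero[of _ N _ k])
  also have "\<dots> = c^N * det (1\<^sub>m k + (1/c) \<cdot>\<^sub>m (W * U))"
    using det_mult[OF carrier(3,1)] LM U W
    by (simp add: L_def det_four_block_mat_lower_left_zero[of _ N _ k]
                  det_four_block_mat_upper_right_zero[of _ N _ k])
  finally have "c^k * det (c \<cdot>\<^sub>m 1\<^sub>m N + U * W)
      = c^N * det (c \<cdot>\<^sub>m (1\<^sub>m k + (1/c) \<cdot>\<^sub>m (W * U)))"
    using U W by simp
  also have "c \<cdot>\<^sub>m (1\<^sub>m k + (1/c) \<cdot>\<^sub>m (W * U)) = c \<cdot>\<^sub>m 1\<^sub>m k + W * U"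
    using U W c by (auto simp: field_simps)
  finally show ?thesis .
qed

lemma det_diag_plus_low_rank:
  fixes c :: "'a::field" and U V :: "nat \<times> nat \<Rightarrow> 'a"
  assumes "c \<noteq> 0"
  shows "c^k * det (mat N N (\<lambda>(a,b). (if a = b then c else 0) + (\<Sum>r<k. U (a,r) * V (r,b))))
       = c^N * det (mat k k (\<lambda>(r,s). (if r = s then c else 0) + (\<Sum>a<N. V (r,a) * U (a,s))))"
proof -
  have "mat N N (\<lambda>(a,b). (if a = b then c else 0) + (\<Sum>r<k. U (a,r) * V (r,b)))
      = c \<cdot>\<^sub>m 1\<^sub>m N + mat N k U * mat k N V"
    "mat k k (\<lambda>(r,s). (if r = s then c else 0) + (\<Sum>a<N. V (r,a) * U (a,s)))
      = c \<cdot>\<^sub>m 1\<^sub>m k + mat k N V * mat N k U"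
    by (auto simp: scalar_prod_def atLeast0LessThan)
  then show ?thesis
    using det_sylvester[of "mat N k U" N k "mat k N V" c] assms by simp
qed

lemma det_mat_Suc_first_row:
  "det (mat (Suc n) (Suc n) f) = (\<Sum>j<Suc n. (-1)^j * f (0,j) *
     det (mat n n (\<lambda>(a,b). f (Suc a, if b < j then b else Suc b))))"
proof -
  have "mat_delete (mat (Suc n) (Suc n) f) 0 j =
      mat n n (\<lambda>(a,b). f (Suc a, if b < j then b else Suc b))" for j
    unfolding mat_delete_def by auto
  then show ?thesis
    by (subst laplace_expansion_row[of _ "Suc n" 0]) (auto simp: cofactor_def ac_simps)
qed

lemma det_bordered_const_offdiag:
  fixes u :: "'a::field" and w :: "nat \<Rightarrow> 'a"
  assumes m: "m \<ge> 2" and u: "u \<noteq> 0"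
  shows "det (mat (m+1) (m+1) (\<lambda>(a,b). if a = b then 0 else if a = 0 then w b
            else if b = 0 then w a else u))
       = (-u)^(m-2) * u * ((\<Sum>i=1..m. w i)\<^sup>2 - of_nat (m-1) * (\<Sum>i=1..m. (w i)\<^sup>2))"
    (is "det ?M = _")
proof -
  define U :: "nat \<times> nat \<Rightarrow> 'a" where "U = (\<lambda>(a,r).
     (case a of 0 \<Rightarrow> [1, 0, 0] | Suc i \<Rightarrow> [0, 1, w (Suc i)]) ! r)"
  define V :: "nat \<times> nat \<Rightarrow> 'a" where "V = (\<lambda>(r,b).
     (case b of 0 \<Rightarrow> [u, 0, 1] | Suc i \<Rightarrow> [w (Suc i), u, 0]) ! r)"
  define s1 where "s1 = (\<Sum>i<m. w (Suc i))"
  define s2 where "s2 = (\<Sum>i<m. (w (Suc i))\<^sup>2)"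
  have big: "?M = mat (m+1) (m+1) (\<lambda>(a,b). (if a = b then -u else 0) + (\<Sum>r<3. U (a,r) * V (r,b)))"
    by (auto simp: U_def V_def numeral_3_eq_3 split: nat.split)
  have small: "mat 3 3 (\<lambda>(r,s). (if r = s then -u else 0) + (\<Sum>a<m+1. V (r,a) * U (a,s)))
      = mat 3 3 (\<lambda>(r,s). [[0, s1, s2], [0, u * of_nat m - u, u * s1], [1, 0, -u]] ! r ! s)"
    (is "_ = ?K")
    by (rule eq_matI) (auto simp: U_def V_def s1_def s2_def sum.lessThan_Suc_shift numeral_3_eq_3
         less_Suc_eq power2_eq_square sum_distrib_left simp del: sum.lessThan_Suc)
  have "det ?K = u * (s1\<^sup>2 - of_nat (m-1) * s2)"
    using m by (simp add: numeral_3_eq_3 det_mat_Suc_first_row of_nat_diff algebra_simps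
        power2_eq_square)
  moreover have "m + 1 = 3 + (m - 2)"
    using m by simp
  then have "(-u)^(m+1) = (-u)^3 * (-u)^(m-2)"
    by (simp only: power_add)
  ultimately have "(-u)^3 * det ?M = (-u)^3 * ((-u)^(m-2) * u * (s1\<^sup>2 - of_nat (m-1) * s2))"
    using det_diag_plus_low_rank[of "-u" 3 "m+1" U V] u unfolding big small by simp
  then show ?thesis
    using u sum_bounds_lt_plus1[of w m] sum_bounds_lt_plus1[of "\<lambda>i. (w i)\<^sup>2" m]
    by (simp add: s1_def s2_def)
qed

lemma det_doubly_bordered_const_offdiag:
  fixes u :: "'a::field" and w :: "nat \<Rightarrow> 'a"
  assumes m: "m \<ge> 2" and u: "u \<noteq> 0"
  shows "det (mat (m+2) (m+2) (\<lambda>(a,b). if a = b then 0 else if a = 0 \<or> b = 0 then 1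
            else if a = 1 then w (b-1) else if b = 1 then w (a-1) else u))
       = (-u)^(m-2) * (of_nat m * (\<Sum>i=1..m. (w i)\<^sup>2) - 2 * u * (\<Sum>i=1..m. w i)
                       - (\<Sum>i=1..m. w i)\<^sup>2 + of_nat (m-1) * u\<^sup>2)"
    (is "det ?M = _")
proof -
  define U :: "nat \<times> nat \<Rightarrow> 'a" where "U = (\<lambda>(a,r).
     (case a of 0 \<Rightarrow> [1, 0, 0, 0] | Suc 0 \<Rightarrow> [0, 1, 0, 0]
        | Suc (Suc i) \<Rightarrow> [0, 0, 1, w (Suc i)]) ! r)"
  define V :: "nat \<times> nat \<Rightarrow> 'a" where "V = (\<lambda>(r,b).
     (case b of 0 \<Rightarrow> [u, 1, 1, 0] | Suc 0 \<Rightarrow> [1, u, 0, 1]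
        | Suc (Suc i) \<Rightarrow> [1, w (Suc i), u, 0]) ! r)"
  define s1 where "s1 = (\<Sum>i<m. w (Suc i))"
  define s2 where "s2 = (\<Sum>i<m. (w (Suc i))\<^sup>2)"
  have big: "?M = mat (m+2) (m+2) (\<lambda>(a,b). (if a = b then -u else 0) + (\<Sum>r<4. U (a,r) * V (r,b)))"
    by (auto simp: U_def V_def numeral_eq_Suc split: nat.split)
  have small: "mat 4 4 (\<lambda>(r,s). (if r = s then -u else 0) + (\<Sum>a<m+2. V (r,a) * U (a,s)))
      = mat 4 4 (\<lambda>(r,s). [[0, 1, of_nat m, s1], [1, 0, s1, s2], [1, 0, u * of_nat m - u, u * s1],
                           [0, 1, 0, -u]] ! r ! s)"
    (is "_ = ?K")
    by (rule eq_matI) (auto simp: U_def V_def s1_def s2_def sum.lessThan_Suc_shift numeral_eq_Suc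
         less_Suc_eq power2_eq_square sum_distrib_left simp del: sum.lessThan_Suc)
  have "det ?K = of_nat m * s2 - 2 * u * s1 - s1\<^sup>2 + of_nat (m-1) * u\<^sup>2"
    using m by (simp add: numeral_eq_Suc det_mat_Suc_first_row of_nat_diff algebra_simps
        power2_eq_square)
  moreover have "m + 2 = 4 + (m - 2)"
    using m by simp
  then have "(-u)^(m+2) = (-u)^4 * (-u)^(m-2)"
    by (simp only: power_add)
  ultimately have "(-u)^4 * det ?M
      = (-u)^4 * ((-u)^(m-2) * (of_nat m * s2 - 2 * u * s1 - s1\<^sup>2 + of_nat (m-1) * u\<^sup>2))"
    using det_diag_plus_low_rank[of "-u" 4 "m+2" U V] u unfolding big small by simp
  then show ?thesis
    using u sum_bounds_lt_plus1[of w m] sum_bounds_lt_plus1[of "\<lambda>i. (w i)\<^sup>2" m]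
    by (simp add: s1_def s2_def)
qed

lemma sq_dist_regular_opposite_facet:
  fixes B :: "nat \<Rightarrow> 'a::real_normed_vector"
  assumes apex: "\<And>i. 1 \<le> i \<Longrightarrow> i \<le> m \<Longrightarrow> (norm (B i - B 0))\<^sup>2 = w i"
    and edge: "\<And>i k. 1 \<le> i \<Longrightarrow> i < k \<Longrightarrow> k \<le> m \<Longrightarrow> (norm (B i - B k))\<^sup>2 = u"
    and "a \<le> m" "b \<le> m"
  shows "(norm (B a - B b))\<^sup>2 = (if a = b then 0 else if a = 0 then w b else if b = 0 then w a else u)"
  using assms apex[of a] apex[of b] edge[of a b] edge[of b a]
  by (cases a b rule: linorder_cases) (auto simp: norm_minus_commute)

lemma inner_cayley_menger_regular_opposite_facet:
  fixes B :: "nat \<Rightarrow> 'a::real_normed_vector"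
  assumes "m \<ge> 2" "u \<noteq> 0"
    and apex: "\<And>i. 1 \<le> i \<Longrightarrow> i \<le> m \<Longrightarrow> (norm (B i - B 0))\<^sup>2 = w i"
    and edge: "\<And>i k. 1 \<le> i \<Longrightarrow> i < k \<Longrightarrow> k \<le> m \<Longrightarrow> (norm (B i - B k))\<^sup>2 = u"
  shows "inner_cayley_menger m B
           = (-u)^(m-2) * u * ((\<Sum>i=1..m. w i)\<^sup>2 - real (m-1) * (\<Sum>i=1..m. (w i)\<^sup>2))"
proof -
  have "inner_cayley_menger m B = det (mat (m+1) (m+1) (\<lambda>(a,b). if a = b then 0
      else if a = 0 then w b else if b = 0 then w a else u))"
    unfolding inner_cayley_menger_def
    by (rule arg_cong[where f = det], rule eq_matI)
      (auto simp: sq_dist_regular_opposite_facet[where B = B and m = m, OF apex edge])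
  then show ?thesis
    using det_bordered_const_offdiag[OF assms(1,2)] by simp
qed

lemma cayley_menger_regular_opposite_facet:
  fixes B :: "nat \<Rightarrow> 'a::real_normed_vector"
  assumes "m \<ge> 2" "u \<noteq> 0"
    and apex: "\<And>i. 1 \<le> i \<Longrightarrow> i \<le> m \<Longrightarrow> (norm (B i - B 0))\<^sup>2 = w i"
    and edge: "\<And>i k. 1 \<le> i \<Longrightarrow> i < k \<Longrightarrow> k \<le> m \<Longrightarrow> (norm (B i - B k))\<^sup>2 = u"
  shows "cayley_menger m B = (-u)^(m-2) * (real m * (\<Sum>i=1..m. (w i)\<^sup>2)
           - 2 * u * (\<Sum>i=1..m. w i) - (\<Sum>i=1..m. w i)\<^sup>2 + real (m-1) * u\<^sup>2)"
proof -
  have "cayley_menger m B = det (mat (m+2) (m+2) (\<lambda>(a,b). if a = b then 0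
      else if a = 0 \<or> b = 0 then 1 else if a = 1 then w (b-1) else if b = 1 then w (a-1) else u))"
    unfolding cayley_menger_def
    by (rule arg_cong[where f = det], rule eq_matI)
      (auto simp: sq_dist_regular_opposite_facet[where B = B and m = m, OF apex edge])
  then show ?thesis
    using det_doubly_bordered_const_offdiag[OF assms(1,2)] by simp
qed

lemma sum_skip_index:
  fixes f :: "nat \<Rightarrow> 'a::ab_group_add"
  assumes "j \<in> {1..n}"
  shows "(\<Sum>i=1..n-1. f (if i < j then i else Suc i)) = (\<Sum>i=1..n. f i) - f j"
proof -
  let ?skip = "\<lambda>i. if i < j then i else Suc i"
  have "inj_on ?skip {1..n-1}"
    by (auto simp: inj_on_def split: if_splits)
  moreover have "?skip ` {1..n-1} = {1..n} - {j}"
  proof (intro equalityI subsetI)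
    fix x assume "x \<in> {1..n} - {j}"
    then have "x = ?skip (if x < j then x else x - 1)" "(if x < j then x else x - 1) \<in> {1..n-1}"
      using assms by auto
    then show "x \<in> ?skip ` {1..n-1}" by blast
  qed (use assms in auto)
  ultimately have "(\<Sum>i=1..n-1. f (?skip i)) = (\<Sum>i\<in>{1..n} - {j}. f i)"
    using sum.reindex[of ?skip "{1..n-1}" f] by simp
  then show ?thesis
    using assms by (simp add: sum_diff1)
qed

lemma sq_dist_facet:
  assumes edge: "\<forall>i k. 1 \<le> i \<and> i < k \<and> k \<le> n \<longrightarrow> (norm (A i - A k))\<^sup>2 = u"
    and "1 \<le> i" "i < k" "k \<le> n - 1"
  shows "(norm (facet j A i - facet j A k))\<^sup>2 = u"
  using assms unfolding facet_def by auto

lemma cayley_menger_facet_opposite_apex: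
  assumes n: "n \<ge> 3" and u: "u \<noteq> 0"
    and edge: "\<forall>i k. 1 \<le> i \<and> i < k \<and> k \<le> n \<longrightarrow> (norm (A i - A k))\<^sup>2 = u"
  shows "cayley_menger (n-1) (facet 0 A) = (-1)^n * real n * u^(n-1)" (is "?C = _")
    and "inner_cayley_menger (n-1) (facet 0 A) = (-1)^(n+1) * u^n * real (n-1)" (is "?D = _")
proof -
  obtain k where k: "n = k + 3"
    using n by (metis add.commute le_Suc_ex)
  have m: "n - 1 \<ge> 2"
    using n by simp
  have apex: "(norm (facet 0 A i - facet 0 A 0))\<^sup>2 = u" if "1 \<le> i" "i \<le> n - 1" for i
    using that edge by (auto simp: facet_def norm_minus_commute)
  note facet_edge = sq_dist_facet[OF edge]
  have "?C = (-u)^k * (real (k+2) * (real (k+2) * u\<^sup>2)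
      - 2 * u * (real (k+2) * u) - (real (k+2) * u)\<^sup>2 + real (k+1) * u\<^sup>2)"
    using cayley_menger_regular_opposite_facet[where m = "n - 1" and B = "facet 0 A"
        and w = "\<lambda>_. u", OF m u apex facet_edge]
    by (simp add: k)
  also have "\<dots> = (-u)^k * (- real n * u\<^sup>2)"
    unfolding k by (simp add: power2_eq_square algebra_simps)
  also have "\<dots> = (-1)^n * real n * u^(n-1)"
    by (simp add: k power_minus[of u k] power_add power2_eq_square algebra_simps)
  finally show "?C = (-1)^n * real n * u^(n-1)" .
  have "?D = (-u)^k * u * ((real (k+2) * u)\<^sup>2 - real (k+1) * (real (k+2) * u\<^sup>2))"
    using inner_cayley_menger_regular_opposite_facet[where m = "n - 1" and B = "facet 0 A"
        and w = "\<lambda>_. u", OF m u apex facet_edge]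
    by (simp add: k)
  also have "\<dots> = (-u)^k * (real (n-1) * u^3)"
    unfolding k by (simp add: power2_eq_square power3_eq_cube algebra_simps)
  also have "\<dots> = (-1)^(n+1) * u^n * real (n-1)"
    by (simp add: k power_minus[of u k] power_add power3_eq_cube algebra_simps)
  finally show "?D = (-1)^(n+1) * u^n * real (n-1)" .
qed

lemma cayley_menger_facet_through_apex:
  fixes v :: "nat \<Rightarrow> real"
  assumes n: "n \<ge> 3" and u: "u \<noteq> 0" and j: "j \<in> {1..n}"
    and apex: "\<forall>i\<in>{1..n}. (norm (A i - A 0))\<^sup>2 = v i"
    and edge: "\<forall>i k. 1 \<le> i \<and> i < k \<and> k \<le> n \<longrightarrow> (norm (A i - A k))\<^sup>2 = u"
    and alpha: "alpha = u + (\<Sum>i=1..n. v i)"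
    and beta: "beta = u\<^sup>2 + (\<Sum>i=1..n. (v i)\<^sup>2)"
  shows "cayley_menger (n-1) (facet j A) =
          (-u)^(n-3) * (- alpha\<^sup>2 + real (n-1) * beta - real n * (v j)\<^sup>2 + 2 * alpha * v j)"
      (is "?C = ?C'")
    and "inner_cayley_menger (n-1) (facet j A) =
          (-u)^(n-2) * (real (n-2) * beta - alpha\<^sup>2 + 2 * alpha * u - real (n-1) * u\<^sup>2
             - real (n-1) * (v j)\<^sup>2 + 2 * alpha * v j - 2 * u * v j)"
      (is "?D = ?D'")
proof -
  obtain k where k: "n = k + 3"
    using n by (metis add.commute le_Suc_ex)
  have m: "n - 1 \<ge> 2"
    using n by simp
  let ?w = "\<lambda>i. v (if i < j then i else Suc i)"
  have facet_apex: "(norm (facet j A i - facet j A 0))\<^sup>2 = ?w i" if "1 \<le> i" "i \<le> n - 1" for i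
    using that j apex by (auto simp: facet_def)
  note facet_edge = sq_dist_facet[OF edge]
  have s1: "(\<Sum>i=1..n-1. ?w i) = alpha - u - v j"
    using sum_skip_index[OF j, of v] alpha by simp
  have s2: "(\<Sum>i=1..n-1. (?w i)\<^sup>2) = beta - u\<^sup>2 - (v j)\<^sup>2"
    using sum_skip_index[OF j, of "\<lambda>i. (v i)\<^sup>2"] beta by simp
  have "?C = (-u)^(n-1-2) * (real (n-1) * (beta - u\<^sup>2 - (v j)\<^sup>2)
      - 2 * u * (alpha - u - v j) - (alpha - u - v j)\<^sup>2 + real (n-1-1) * u\<^sup>2)"
    using cayley_menger_regular_opposite_facet[where m = "n - 1" and B = "facet j A" and w = ?w,
        OF m u facet_apex facet_edge]
    by (simp only: s1 s2)
  also have "\<dots> = ?C'"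
    unfolding k by (simp add: power2_eq_square algebra_simps)
  finally show "?C = ?C'" .
  have "?D = (-u)^(n-1-2) * u * ((alpha - u - v j)\<^sup>2
      - real (n-1-1) * (beta - u\<^sup>2 - (v j)\<^sup>2))"
    using inner_cayley_menger_regular_opposite_facet[where m = "n - 1" and B = "facet j A"
        and w = ?w, OF m u facet_apex facet_edge]
    by (simp only: s1 s2)
  also have "\<dots> = ?D'"
    unfolding k by (simp add: power2_eq_square algebra_simps)
  finally show "?D = ?D'" .
qed

theorem theorem4p2:
  fixes n :: nat and u alpha beta :: real and v :: "nat \<Rightarrow> real"
    and A :: "nat \<Rightarrow> 'a::euclidean_space"
  assumes "n \<ge> 3" and "u > 0"
    and "inj_on A {0..n}" and "\<not> affine_dependent (A ` {0..n})"
    and "\<forall>i\<in>{1..n}. (norm (A i - A 0))\<^sup>2 = v i"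
    and "\<forall>i j. 1 \<le> i \<and> i < j \<and> j \<le> n \<longrightarrow> (norm (A i - A j))\<^sup>2 = u"
    and "alpha = u + (\<Sum>i=1..n. v i)"
    and "beta = u\<^sup>2 + (\<Sum>i=1..n. (v i)\<^sup>2)"
  shows "cayley_menger (n-1) (facet 0 A) = (-1)^n * real n * u^(n-1)
    \<and> (\<forall>j\<in>{1..n}. cayley_menger (n-1) (facet j A) =
          (-u)^(n-3) * (- alpha\<^sup>2 + real (n-1) * beta - real n * (v j)\<^sup>2 + 2 * alpha * v j))
    \<and> inner_cayley_menger (n-1) (facet 0 A) = (-1)^(n+1) * u^n * real (n-1)
    \<and> (\<forall>j\<in>{1..n}. inner_cayley_menger (n-1) (facet j A) =
          (-u)^(n-2) * (real (n-2) * beta - alpha\<^sup>2 + 2 * alpha * u - real (n-1) * u\<^sup>2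
             - real (n-1) * (v j)\<^sup>2 + 2 * alpha * v j - 2 * u * v j))"
proof -
  have u: "u \<noteq> 0"
    using \<open>u > 0\<close> by simp
  show ?thesis
    using cayley_menger_facet_opposite_apex[OF \<open>n \<ge> 3\<close> u assms(6)]
      cayley_menger_facet_through_apex[OF \<open>n \<ge> 3\<close> u _ assms(5,6,7,8)]
    by blast
qed

end
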